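(* Fix a positive integer $R$ and let $b_R(n)=1-\frac{1}{2^n}\sum_{k=0}^n\binom{n}{k}\max\big(\frac1R,2^{-\min(k,n-k)}\big)$. Then $\lim_{n\to\infty}b_R(n)=\frac{R-1}{R}$; consequently $\limsup_{n\to\infty}\sup\{\mathcal{C}(\ket{\psi}):\ket{\psi}\text{ an }n\text{-qubit pure state with }\mathrm{rk}(\ket{\psi})=R\}\le\frac{R-1}{R}$, i.e. asymptotically a state of CP rank $R$ has concentratable entanglement at most $\frac{R-1}{R}$.
   Context: The CP rank $\mathrm{rk}(\ket{\psi})$ of an $n$-qubit state is the minimal $r$ with $\ket{\psi}=\sum_{i=1}^r c_i\bigotimes_{j=1}^n\ket{\phi_i^{(j)}}$. The concentratable entanglement is $\mathcal{C}(\ket{\psi})=1-\frac{1}{2^{n}}\sum_{\alpha\subseteq [n]}\mathrm{Tr}[\rho_\alpha^2]$, with $\rho_\alpha$ the reduced state on $\alpha$ and $\mathrm{Tr}[\rho_\emptyset^2]=1$. *)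

theory Defs
  imports "HOL-Analysis.Analysis" "HOL-Library.Liminf_Limsup"
begin

text \<open>Qubits are indexed 0..n-1.
  A (not necessarily normalized) n-qubit vector is a function from bit strings to amplitudes;
  only its values on strings of length n matter.\<close>

definition bits :: "nat \<Rightarrow> bool list set" where
  "bits n = {xs. length xs = n}"

definition is_pure_state :: "nat \<Rightarrow> (bool list \<Rightarrow> complex) \<Rightarrow> bool" where
  "is_pure_state n \<psi> \<longleftrightarrow> (\<Sum>x\<in>bits n. (cmod (\<psi> x))\<^sup>2) = 1"

definition cp_rank :: "nat \<Rightarrow> (bool list \<Rightarrow> complex) \<Rightarrow> nat" where
  "cp_rank n \<psi> = (LEAST r. \<exists>(c :: nat \<Rightarrow> complex) (\<phi> :: nat \<Rightarrow> nat \<Rightarrow> bool \<Rightarrow> complex).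
      \<forall>x\<in>bits n. \<psi> x = (\<Sum>i<r. c i * (\<Prod>j<n. \<phi> i j (x ! j))))"

definition combine :: "nat \<Rightarrow> nat set \<Rightarrow> bool list \<Rightarrow> bool list \<Rightarrow> bool list" where
  "combine n \<alpha> x y = map (\<lambda>i. if i \<in> \<alpha> then x ! i else y ! i) [0..<n]"

text \<open>Basis strings for the subsystem \<alpha> (canonical representatives: zero outside \<alpha>).\<close>
definition sub_bits :: "nat \<Rightarrow> nat set \<Rightarrow> bool list set" where
  "sub_bits n \<alpha> = {x\<in>bits n. \<forall>i<n. i \<notin> \<alpha> \<longrightarrow> \<not> x ! i}"

text \<open>Reduced density matrix rho_alpha = Tr_{complement of alpha} |psi><psi|.\<close>
definition reduced_state :: "nat \<Rightarrow> nat set \<Rightarrow> (bool list \<Rightarrow> complex) \<Rightarrow> bool list \<Rightarrow> bool list \<Rightarrow> complex" where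
  "reduced_state n \<alpha> \<psi> a a' =
     (\<Sum>b\<in>sub_bits n ({0..<n} - \<alpha>). \<psi> (combine n \<alpha> a b) * cnj (\<psi> (combine n \<alpha> a' b)))"

definition purity :: "nat \<Rightarrow> nat set \<Rightarrow> (bool list \<Rightarrow> complex) \<Rightarrow> real" where
  "purity n \<alpha> \<psi> = Re (\<Sum>a\<in>sub_bits n \<alpha>. \<Sum>a'\<in>sub_bits n \<alpha>.
      reduced_state n \<alpha> \<psi> a a' * reduced_state n \<alpha> \<psi> a' a)"

definition conc_ent :: "nat \<Rightarrow> (bool list \<Rightarrow> complex) \<Rightarrow> real" where
  "conc_ent n \<psi> = 1 - (1 / 2 ^ n) * (\<Sum>\<alpha>\<in>Pow {0..<n}. purity n \<alpha> \<psi>)"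

definition b_R :: "nat \<Rightarrow> nat \<Rightarrow> real" where
  "b_R R n = 1 - (1 / 2 ^ n) * (\<Sum>k=0..n. real (n choose k) * max (1 / real R) ((1/2) ^ min k (n - k)))"

end

(*
  Cut the qubits into \<alpha> and its complement. A CP decomposition with R terms writes \<psi> as a
  sum of R product vectors across the cut, so the reduced state \<rho>\<^sub>\<alpha> has rank at most R.
  Expanding the \<alpha>-factors in an orthonormal frame of size m \<le> R (Gram-Schmidt) turns the
  purity of \<rho>\<^sub>\<alpha> into the squared Frobenius norm of an m x m Gram matrix, and Cauchy-Schwarz
  on its diagonal gives (Tr \<rho>\<^sub>\<alpha>)\<^sup>2 \<le> m Tr \<rho>\<^sub>\<alpha>\<^sup>2, i.e. Tr \<rho>\<^sub>\<alpha>\<^sup>2 \<ge> 1/R. Averaging over \<alpha> gives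
  C(\<psi>) \<le> 1 - 1/R for every n, while b_R(n) is squeezed between 1 - 1/R - 2 (3/4)\<^sup>n and 1 - 1/R.
*)
theory Submission
  imports Defs
begin

definition inner_on :: "'a set \<Rightarrow> ('a \<Rightarrow> complex) \<Rightarrow> ('a \<Rightarrow> complex) \<Rightarrow> complex" where
  "inner_on S f g = (\<Sum>a\<in>S. cnj (f a) * g a)"

definition orthonormal_on :: "'a set \<Rightarrow> nat \<Rightarrow> (nat \<Rightarrow> 'a \<Rightarrow> complex) \<Rightarrow> bool" where
  "orthonormal_on S m e \<longleftrightarrow> (\<forall>k<m. \<forall>l<m. inner_on S (e k) (e l) = (if k = l then 1 else 0))"

definition in_span_on :: "'a set \<Rightarrow> nat \<Rightarrow> (nat \<Rightarrow> 'a \<Rightarrow> complex) \<Rightarrow> ('a \<Rightarrow> complex) \<Rightarrow> bool" where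
  "in_span_on S m e f \<longleftrightarrow> (\<exists>c. \<forall>a\<in>S. f a = (\<Sum>k<m. c k * e k a))"

lemma of_real_norm_sq_cnj: "complex_of_real ((cmod z)\<^sup>2) = cnj z * z"
  by (simp only: complex_norm_square mult.commute)

lemma inner_on_self: "inner_on S f f = complex_of_real (\<Sum>a\<in>S. (cmod (f a))\<^sup>2)"
  unfolding inner_on_def of_real_sum by (simp only: of_real_norm_sq_cnj)

lemma inner_on_commute: "inner_on S g f = cnj (inner_on S f g)"
  unfolding inner_on_def by (simp add: mult.commute)

lemma inner_on_sum_right:
  "inner_on S f (\<lambda>a. \<Sum>k<m. c k * g k a) = (\<Sum>k<m. c k * inner_on S f (g k))"
  unfolding inner_on_def by (simp add: sum_distrib_left algebra_simps sum.swap[of _ S])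

lemma inner_on_sum_left:
  "inner_on S (\<lambda>a. \<Sum>k<m. c k * g k a) f = (\<Sum>k<m. cnj (c k) * inner_on S (g k) f)"
  unfolding inner_on_def by (simp add: sum_distrib_left sum_distrib_right algebra_simps sum.swap[of _ S])

lemma sum_orthonormal_on_delta:
  assumes "orthonormal_on S m e" "k < m"
  shows "(\<Sum>l<m. d l * inner_on S (e k) (e l)) = d k"
proof -
  have "(\<Sum>l<m. d l * inner_on S (e k) (e l)) = (\<Sum>l<m. if l = k then d l else 0)"
    using assms unfolding orthonormal_on_def by (intro sum.cong) auto
  also have "\<dots> = d k" using assms(2) by simp
  finally show ?thesis .
qed

lemma inner_on_orthonormal_coords:
  assumes "orthonormal_on S m e"
  shows "inner_on S (\<lambda>a. \<Sum>k<m. c k * e k a) (\<lambda>a. \<Sum>k<m. d k * e k a) = inner_on {..<m} c d"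
  using sum_orthonormal_on_delta[OF assms]
  by (simp add: inner_on_sum_left inner_on_sum_right inner_on_def)

lemma inner_on_residual:
  assumes "orthonormal_on S m e" "l < m"
  shows "inner_on S (e l) (\<lambda>a. x a - (\<Sum>k<m. inner_on S (e k) x * e k a)) = 0"
proof -
  have "inner_on S (e l) (\<lambda>a. x a - (\<Sum>k<m. inner_on S (e k) x * e k a))
      = inner_on S (e l) x - (\<Sum>k<m. inner_on S (e k) x * inner_on S (e l) (e k))"
    by (simp add: inner_on_def right_diff_distrib sum_subtractf flip: inner_on_sum_right[unfolded inner_on_def])
  also have "(\<Sum>k<m. inner_on S (e k) x * inner_on S (e l) (e k)) = inner_on S (e l) x"
    using sum_orthonormal_on_delta[OF assms] .
  finally show ?thesis by simp
qed

lemma orthonormal_on_extend: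
  assumes "orthonormal_on S m e" "\<And>l. l < m \<Longrightarrow> inner_on S (e l) v = 0" "inner_on S v v = 1"
  shows "orthonormal_on S (Suc m) (e(m := v))"
  unfolding orthonormal_on_def
proof (intro allI impI)
  fix k l assume "k < Suc m" "l < Suc m"
  then consider "k < m" "l < m" | "k = m" "l < m" | "k < m" "l = m" | "k = m" "l = m"
    by linarith
  then show "inner_on S ((e(m := v)) k) ((e(m := v)) l) = (if k = l then 1 else 0)"
  proof cases
    case 2
    then show ?thesis using assms(2)[of l] inner_on_commute[of S v "e l"] by simp
  qed (use assms in \<open>auto simp: orthonormal_on_def\<close>)
qed

lemma in_span_on_extend:
  assumes "in_span_on S m e f"
  shows "in_span_on S (Suc m) (e(m := v)) f"
proof -
  obtain c where "\<forall>a\<in>S. f a = (\<Sum>k<m. c k * e k a)"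
    using assms unfolding in_span_on_def by blast
  then have "\<forall>a\<in>S. f a = (\<Sum>k<Suc m. (c(m := 0)) k * (e(m := v)) k a)"
    by simp
  then show ?thesis unfolding in_span_on_def by blast
qed

lemma gram_schmidt_step:
  assumes "finite S" "orthonormal_on S m e"
  shows "\<exists>m' e'. m' \<le> Suc m \<and> orthonormal_on S m' e' \<and> in_span_on S m' e' x \<and>
           (\<forall>f. in_span_on S m e f \<longrightarrow> in_span_on S m' e' f)"
proof -
  define w where "w a = x a - (\<Sum>k<m. inner_on S (e k) x * e k a)" for a
  define N where "N = (\<Sum>a\<in>S. (cmod (w a))\<^sup>2)"
  have orth: "inner_on S (e l) w = 0" if "l < m" for l
    unfolding w_def using inner_on_residual[OF assms(2) that] .
  show ?thesis
  proof (cases "N = 0")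
    case True
    then have "\<forall>a\<in>S. w a = 0"
      using assms(1) unfolding N_def by (simp add: sum_nonneg_eq_0_iff)
    then have "in_span_on S m e x"
      unfolding in_span_on_def w_def by (intro exI[of _ "\<lambda>k. inner_on S (e k) x"]) simp
    then show ?thesis using assms(2) by (intro exI[of _ m] exI[of _ e]) simp
  next
    case False
    then have "N > 0" unfolding N_def by (simp add: sum_nonneg order_less_le)
    define s where "s = complex_of_real (sqrt N)"
    define v where "v a = w a / s" for a
    have "s \<noteq> 0" using \<open>N > 0\<close> by (simp add: s_def)
    have "inner_on S v v = inner_on S w w / (cnj s * s)"
      unfolding v_def inner_on_def by (simp add: sum_divide_distrib)
    also have "\<dots> = 1"
      using \<open>N > 0\<close> by (simp add: inner_on_self N_def[symmetric] s_def flip: of_real_mult)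
    finally have unit: "inner_on S v v = 1" .
    have "inner_on S (e l) v = 0" if "l < m" for l
      using orth[OF that] unfolding v_def inner_on_def by (simp add: sum_divide_distrib[symmetric])
    then have "orthonormal_on S (Suc m) (e(m := v))"
      using orthonormal_on_extend[OF assms(2)] unit by blast
    moreover have "\<forall>a\<in>S. x a = (\<Sum>k<Suc m. ((\<lambda>k. inner_on S (e k) x)(m := s)) k * (e(m := v)) k a)"
      using \<open>s \<noteq> 0\<close> by (simp add: v_def w_def)
    ultimately show ?thesis
      using in_span_on_extend unfolding in_span_on_def by blast
  qed
qed

lemma gram_schmidt_on:
  assumes "finite S"
  shows "\<exists>m e. m \<le> R \<and> orthonormal_on S m e \<and> (\<forall>i<R. in_span_on S m e (u i))"
proof (induction R)
  case 0
  show ?case by (auto simp: orthonormal_on_def)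
next
  case (Suc R)
  then obtain m e where "m \<le> R" "orthonormal_on S m e" "\<forall>i<R. in_span_on S m e (u i)"
    by blast
  with gram_schmidt_step[OF assms, of m e "u R"] obtain m' e'
    where "m' \<le> Suc m" "orthonormal_on S m' e'" "in_span_on S m' e' (u R)"
      "\<forall>i<R. in_span_on S m' e' (u i)"
    by blast
  then show ?case
    using \<open>m \<le> R\<close> by (intro exI[of _ m'] exI[of _ e']) (auto simp: less_Suc_eq)
qed

lemma sum_swap_pairs:
  "(\<Sum>a\<in>A. \<Sum>a'\<in>A'. \<Sum>b\<in>B. \<Sum>b'\<in>B'. f a a' b b') = (\<Sum>b\<in>B. \<Sum>b'\<in>B'. \<Sum>a\<in>A. \<Sum>a'\<in>A'. f a a' b b')"
proof -
  have "(\<Sum>a\<in>A. \<Sum>a'\<in>A'. \<Sum>b\<in>B. \<Sum>b'\<in>B'. f a a' b b') = (\<Sum>a\<in>A. \<Sum>b\<in>B. \<Sum>b'\<in>B'. \<Sum>a'\<in>A'. f a a' b b')"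
    by (intro sum.cong refl) (simp only: sum.swap[of _ A'] sum.swap[of _ A' B'])
  also have "\<dots> = (\<Sum>b\<in>B. \<Sum>b'\<in>B'. \<Sum>a\<in>A. \<Sum>a'\<in>A'. f a a' b b')"
    by (simp only: sum.swap[of _ A] sum.swap[of _ A B'])
  finally show ?thesis .
qed

lemma marginal_purities_eq:
  fixes \<Psi> :: "'a \<Rightarrow> 'b \<Rightarrow> complex"
  shows "(\<Sum>a\<in>A. \<Sum>a'\<in>A. (cmod (\<Sum>b\<in>B. \<Psi> a b * cnj (\<Psi> a' b)))\<^sup>2)
       = (\<Sum>b\<in>B. \<Sum>b'\<in>B. (cmod (inner_on A (\<lambda>a. \<Psi> a b) (\<lambda>a. \<Psi> a b')))\<^sup>2)"
proof -
  have "complex_of_real (\<Sum>a\<in>A. \<Sum>a'\<in>A. (cmod (\<Sum>b\<in>B. \<Psi> a b * cnj (\<Psi> a' b)))\<^sup>2)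
      = (\<Sum>a\<in>A. \<Sum>a'\<in>A. \<Sum>b\<in>B. \<Sum>b'\<in>B. \<Psi> a b * cnj (\<Psi> a' b) * cnj (\<Psi> a b') * \<Psi> a' b')"
    by (simp only: of_real_sum complex_norm_square) (simp add: sum_product mult_ac)
  also have "\<dots> = (\<Sum>b\<in>B. \<Sum>b'\<in>B. \<Sum>a\<in>A. \<Sum>a'\<in>A. \<Psi> a b * cnj (\<Psi> a' b) * cnj (\<Psi> a b') * \<Psi> a' b')"
    by (rule sum_swap_pairs)
  also have "\<dots> = complex_of_real (\<Sum>b\<in>B. \<Sum>b'\<in>B. (cmod (inner_on A (\<lambda>a. \<Psi> a b) (\<lambda>a. \<Psi> a b')))\<^sup>2)"
    by (simp only: of_real_sum of_real_norm_sq_cnj) (simp add: inner_on_def sum_product mult_ac)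
  finally show ?thesis by (simp only: of_real_eq_iff)
qed

lemma sum_sq_le_card_mul_gram:
  fixes d :: "'b \<Rightarrow> nat \<Rightarrow> complex"
  shows "(\<Sum>b\<in>T. \<Sum>k<m. (cmod (d b k))\<^sup>2)\<^sup>2
       \<le> real m * (\<Sum>k<m. \<Sum>l<m. (cmod (\<Sum>b\<in>T. d b k * cnj (d b l)))\<^sup>2)"
proof -
  define t where "t k = (\<Sum>b\<in>T. (cmod (d b k))\<^sup>2)" for k
  have diagonal: "(t k)\<^sup>2 \<le> (\<Sum>l<m. (cmod (\<Sum>b\<in>T. d b k * cnj (d b l)))\<^sup>2)" if "k < m" for k
  proof -
    have "(\<Sum>b\<in>T. d b k * cnj (d b k)) = complex_of_real (t k)"
      unfolding t_def of_real_sum by (simp only: complex_norm_square)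
    then have "(t k)\<^sup>2 = (cmod (\<Sum>b\<in>T. d b k * cnj (d b k)))\<^sup>2"
      by (simp only: norm_of_real power2_abs)
    also have "\<dots> \<le> (\<Sum>l<m. (cmod (\<Sum>b\<in>T. d b k * cnj (d b l)))\<^sup>2)"
      using that by (intro member_le_sum) auto
    finally show ?thesis .
  qed
  have "(\<Sum>b\<in>T. \<Sum>k<m. (cmod (d b k))\<^sup>2) = (\<Sum>k<m. t k)"
    unfolding t_def by (rule sum.swap)
  also have "(\<Sum>k<m. t k)\<^sup>2 \<le> real m * (\<Sum>k<m. (t k)\<^sup>2)"
    using Cauchy_Schwarz_ineq_sum[of t "\<lambda>_. 1" "{..<m}"] by (simp add: mult.commute)
  also have "\<dots> \<le> real m * (\<Sum>k<m. \<Sum>l<m. (cmod (\<Sum>b\<in>T. d b k * cnj (d b l)))\<^sup>2)"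
    using diagonal by (intro mult_left_mono sum_mono) auto
  finally show ?thesis .
qed

lemma trace_sq_le_frame_dim_mul_purity:
  fixes \<Psi> :: "'a \<Rightarrow> 'b \<Rightarrow> complex"
  assumes "orthonormal_on S m e"
    and coords: "\<And>a b. a \<in> S \<Longrightarrow> b \<in> T \<Longrightarrow> \<Psi> a b = (\<Sum>k<m. d b k * e k a)"
  shows "(\<Sum>b\<in>T. \<Sum>a\<in>S. (cmod (\<Psi> a b))\<^sup>2)\<^sup>2
       \<le> real m * (\<Sum>a\<in>S. \<Sum>a'\<in>S. (cmod (\<Sum>b\<in>T. \<Psi> a b * cnj (\<Psi> a' b)))\<^sup>2)"
proof -
  have slices: "inner_on S (\<lambda>a. \<Psi> a b) (\<lambda>a. \<Psi> a b') = inner_on {..<m} (d b) (d b')"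
    if "b \<in> T" "b' \<in> T" for b b'
  proof -
    have "inner_on S (\<lambda>a. \<Psi> a b) (\<lambda>a. \<Psi> a b')
        = inner_on S (\<lambda>a. \<Sum>k<m. d b k * e k a) (\<lambda>a. \<Sum>k<m. d b' k * e k a)"
      unfolding inner_on_def by (intro sum.cong refl) (simp add: coords that)
    then show ?thesis using inner_on_orthonormal_coords[OF assms(1)] by simp
  qed
  have "(\<Sum>a\<in>S. (cmod (\<Psi> a b))\<^sup>2) = (\<Sum>k<m. (cmod (d b k))\<^sup>2)" if "b \<in> T" for b
    using slices[OF that that] by (simp only: inner_on_self of_real_eq_iff)
  then have "(\<Sum>b\<in>T. \<Sum>a\<in>S. (cmod (\<Psi> a b))\<^sup>2) = (\<Sum>b\<in>T. \<Sum>k<m. (cmod (d b k))\<^sup>2)"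
    by (rule sum.cong[OF refl])
  moreover have "(\<Sum>a\<in>S. \<Sum>a'\<in>S. (cmod (\<Sum>b\<in>T. \<Psi> a b * cnj (\<Psi> a' b)))\<^sup>2)
      = (\<Sum>k<m. \<Sum>l<m. (cmod (\<Sum>b\<in>T. d b k * cnj (d b l)))\<^sup>2)"
    \<comment> \<open>both sides are rewritten to the purity of the other marginal, computed in the frame\<close>
    by (simp add: marginal_purities_eq slices cong: sum.cong)
  ultimately show ?thesis by (simp only: sum_sq_le_card_mul_gram)
qed

lemma trace_sq_le_rank_mul_purity:
  fixes \<Psi> :: "'a \<Rightarrow> 'b \<Rightarrow> complex"
  assumes "finite S"
    and decomp: "\<And>a b. a \<in> S \<Longrightarrow> b \<in> T \<Longrightarrow> \<Psi> a b = (\<Sum>i<R. u i a * w i b)"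
  shows "(\<Sum>b\<in>T. \<Sum>a\<in>S. (cmod (\<Psi> a b))\<^sup>2)\<^sup>2
       \<le> real R * (\<Sum>a\<in>S. \<Sum>a'\<in>S. (cmod (\<Sum>b\<in>T. \<Psi> a b * cnj (\<Psi> a' b)))\<^sup>2)"
proof -
  obtain m e where "m \<le> R" and frame: "orthonormal_on S m e"
    and "\<forall>i<R. in_span_on S m e (u i)"
    using gram_schmidt_on[OF assms(1)] by blast
  then obtain C where C: "\<And>i a. i < R \<Longrightarrow> a \<in> S \<Longrightarrow> u i a = (\<Sum>k<m. C i k * e k a)"
    unfolding in_span_on_def by metis
  define d where "d b k = (\<Sum>i<R. w i b * C i k)" for b k
  have "\<Psi> a b = (\<Sum>k<m. d b k * e k a)" if "a \<in> S" "b \<in> T" for a b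
  proof -
    have "\<Psi> a b = (\<Sum>i<R. \<Sum>k<m. w i b * C i k * e k a)"
      using that by (simp add: decomp C sum_distrib_left sum_distrib_right mult_ac)
    also have "\<dots> = (\<Sum>k<m. d b k * e k a)"
      unfolding d_def sum_distrib_right by (rule sum.swap)
    finally show ?thesis .
  qed
  then have "(\<Sum>b\<in>T. \<Sum>a\<in>S. (cmod (\<Psi> a b))\<^sup>2)\<^sup>2
      \<le> real m * (\<Sum>a\<in>S. \<Sum>a'\<in>S. (cmod (\<Sum>b\<in>T. \<Psi> a b * cnj (\<Psi> a' b)))\<^sup>2)"
    by (rule trace_sq_le_frame_dim_mul_purity[OF frame])
  also have "\<dots> \<le> real R * (\<Sum>a\<in>S. \<Sum>a'\<in>S. (cmod (\<Sum>b\<in>T. \<Psi> a b * cnj (\<Psi> a' b)))\<^sup>2)"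
    using \<open>m \<le> R\<close> by (intro mult_right_mono) (auto simp: sum_nonneg)
  finally show ?thesis .
qed

lemma finite_bits: "finite (bits n)"
  unfolding bits_def using finite_lists_length_eq[of "UNIV :: bool set" n] by simp

lemma finite_sub_bits: "finite (sub_bits n \<alpha>)"
  unfolding sub_bits_def using finite_bits by simp

lemma prod_indicator_bits:
  assumes "x \<in> bits n" "y \<in> bits n"
  shows "(\<Prod>j<n. if x ! j = y ! j then 1 else 0 :: complex) = (if x = y then 1 else 0)"
proof (cases "x = y")
  case False
  then obtain j where "j < n" "x ! j \<noteq> y ! j"
    using assms unfolding bits_def by (auto simp: list_eq_iff_nth_eq)
  then show ?thesis using False by (intro trans[OF prod_zero]) auto
qed simp

lemma cp_rank_decomposition:
  "\<exists>(c :: nat \<Rightarrow> complex) (\<phi> :: nat \<Rightarrow> nat \<Rightarrow> bool \<Rightarrow> complex).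
     \<forall>x\<in>bits n. \<psi> x = (\<Sum>i<cp_rank n \<psi>. c i * (\<Prod>j<n. \<phi> i j (x ! j)))"
proof -
  obtain h where h: "bij_betw h {0..<card (bits n)} (bits n)"
    using ex_bij_betw_nat_finite[OF finite_bits] by blast
  have "\<forall>x\<in>bits n. \<psi> x = (\<Sum>i<card (bits n). \<psi> (h i) * (\<Prod>j<n. if x ! j = h i ! j then 1 else 0))"
  proof
    fix x assume x: "x \<in> bits n"
    have "(\<Sum>i<card (bits n). \<psi> (h i) * (\<Prod>j<n. if x ! j = h i ! j then 1 else 0))
        = (\<Sum>i\<in>{0..<card (bits n)}. \<psi> (h i) * (if x = h i then 1 else 0))"
      using bij_betwE[OF h] by (intro sum.cong) (auto simp: prod_indicator_bits[OF x])
    also have "\<dots> = (\<Sum>y\<in>bits n. \<psi> y * (if x = y then 1 else 0))"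
      using sum.reindex_bij_betw[OF h, of "\<lambda>y. \<psi> y * (if x = y then 1 else 0)"] .
    also have "\<dots> = \<psi> x"
      using x finite_bits by (simp add: if_distrib cong: if_cong)
    finally show "\<psi> x = (\<Sum>i<card (bits n). \<psi> (h i) * (\<Prod>j<n. if x ! j = h i ! j then 1 else 0))" ..
  qed
  then have "\<exists>r (c :: nat \<Rightarrow> complex) (\<phi> :: nat \<Rightarrow> nat \<Rightarrow> bool \<Rightarrow> complex).
      \<forall>x\<in>bits n. \<psi> x = (\<Sum>i<r. c i * (\<Prod>j<n. \<phi> i j (x ! j)))"
    by (intro exI[of _ "card (bits n)"] exI[of _ "\<lambda>i. \<psi> (h i)"]
        exI[of _ "\<lambda>i j b. if b = h i ! j then 1 else 0"])
  then show ?thesis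
    unfolding cp_rank_def by (rule LeastI_ex)
qed

lemma length_combine [simp]: "length (combine n \<alpha> a b) = n"
  by (simp add: combine_def)

lemma nth_combine [simp]: "j < n \<Longrightarrow> combine n \<alpha> a b ! j = (if j \<in> \<alpha> then a ! j else b ! j)"
  by (simp add: combine_def)

lemma bij_betw_combine:
  "bij_betw (\<lambda>(a, b). combine n \<alpha> a b) (sub_bits n \<alpha> \<times> sub_bits n ({0..<n} - \<alpha>)) (bits n)"
proof (rule bij_betw_byWitness[where f' = "\<lambda>x. (combine n \<alpha> x (replicate n False),
                                              combine n ({0..<n} - \<alpha>) x (replicate n False))"])
  show "\<forall>p\<in>sub_bits n \<alpha> \<times> sub_bits n ({0..<n} - \<alpha>).
          (combine n \<alpha> (case p of (a, b) \<Rightarrow> combine n \<alpha> a b) (replicate n False),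
           combine n ({0..<n} - \<alpha>) (case p of (a, b) \<Rightarrow> combine n \<alpha> a b) (replicate n False)) = p"
    unfolding sub_bits_def bits_def by (auto intro!: nth_equalityI split: if_splits)
  show "\<forall>x\<in>bits n. (case (combine n \<alpha> x (replicate n False),
                          combine n ({0..<n} - \<alpha>) x (replicate n False)) of
                      (a, b) \<Rightarrow> combine n \<alpha> a b) = x"
    unfolding bits_def by (auto intro!: nth_equalityI split: if_splits)
qed (auto simp: sub_bits_def bits_def)

lemma sum_sub_bits_combine:
  "(\<Sum>b\<in>sub_bits n ({0..<n} - \<alpha>). \<Sum>a\<in>sub_bits n \<alpha>. g (combine n \<alpha> a b)) = (\<Sum>x\<in>bits n. g x)"
proof -
  have "(\<Sum>b\<in>sub_bits n ({0..<n} - \<alpha>). \<Sum>a\<in>sub_bits n \<alpha>. g (combine n \<alpha> a b))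
      = (\<Sum>(a, b)\<in>sub_bits n \<alpha> \<times> sub_bits n ({0..<n} - \<alpha>). g (combine n \<alpha> a b))"
    by (subst sum.swap) (rule sum.cartesian_product)
  also have "\<dots> = (\<Sum>x\<in>bits n. g x)"
    using sum.reindex_bij_betw[OF bij_betw_combine, of g] by (simp add: case_prod_beta')
  finally show ?thesis .
qed

lemma purity_eq_sum_norm_sq:
  "purity n \<alpha> \<psi> = (\<Sum>a\<in>sub_bits n \<alpha>. \<Sum>a'\<in>sub_bits n \<alpha>. (cmod (reduced_state n \<alpha> \<psi> a a'))\<^sup>2)"
proof -
  have "reduced_state n \<alpha> \<psi> a a' * reduced_state n \<alpha> \<psi> a' a
      = complex_of_real ((cmod (reduced_state n \<alpha> \<psi> a a'))\<^sup>2)" for a a'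
  proof -
    have "reduced_state n \<alpha> \<psi> a' a = cnj (reduced_state n \<alpha> \<psi> a a')"
      unfolding reduced_state_def by (simp add: mult.commute)
    then show ?thesis by (simp only: complex_norm_square)
  qed
  then show ?thesis
    unfolding purity_def by (simp only: of_real_sum[symmetric] Re_complex_of_real)
qed

lemma cp_rank_decomposition_across_cut:
  "\<exists>u w. \<forall>a b. \<psi> (combine n \<alpha> a b) = (\<Sum>i<cp_rank n \<psi>. u i a * w i b)"
proof -
  obtain c \<phi> where decomp: "\<forall>x\<in>bits n. \<psi> x = (\<Sum>i<cp_rank n \<psi>. c i * (\<Prod>j<n. \<phi> i j (x ! j)))"
    using cp_rank_decomposition by blast
  have prod_split: "(\<Prod>j<n. \<phi> i j (combine n \<alpha> a b ! j))
      = (\<Prod>j\<in>{..<n} \<inter> {j. j \<in> \<alpha>}. \<phi> i j (a ! j)) * (\<Prod>j\<in>{..<n} \<inter> - {j. j \<in> \<alpha>}. \<phi> i j (b ! j))"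
    for i a b
  proof -
    have "(\<Prod>j<n. \<phi> i j (combine n \<alpha> a b ! j))
        = (\<Prod>j<n. if j \<in> \<alpha> then \<phi> i j (a ! j) else \<phi> i j (b ! j))"
      by (intro prod.cong) auto
    then show ?thesis by (simp add: prod.If_cases)
  qed
  define u where "u i a = c i * (\<Prod>j\<in>{..<n} \<inter> {j. j \<in> \<alpha>}. \<phi> i j (a ! j))" for i a
  define w where "w i b = (\<Prod>j\<in>{..<n} \<inter> - {j. j \<in> \<alpha>}. \<phi> i j (b ! j))" for i b
  have "\<forall>a b. \<psi> (combine n \<alpha> a b) = (\<Sum>i<cp_rank n \<psi>. u i a * w i b)"
    using decomp prod_split by (simp add: u_def w_def bits_def mult.assoc)
  then show ?thesis by blast
qed

lemma one_le_cp_rank_mul_purity: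
  assumes "is_pure_state n \<psi>"
  shows "1 \<le> real (cp_rank n \<psi>) * purity n \<alpha> \<psi>"
proof -
  let ?A = "sub_bits n \<alpha>" and ?B = "sub_bits n ({0..<n} - \<alpha>)"
  obtain u w where split: "\<forall>a b. \<psi> (combine n \<alpha> a b) = (\<Sum>i<cp_rank n \<psi>. u i a * w i b)"
    using cp_rank_decomposition_across_cut by blast
  have "(\<Sum>b\<in>?B. \<Sum>a\<in>?A. (cmod (\<psi> (combine n \<alpha> a b)))\<^sup>2)\<^sup>2
      \<le> real (cp_rank n \<psi>) * (\<Sum>a\<in>?A. \<Sum>a'\<in>?A.
          (cmod (\<Sum>b\<in>?B. \<psi> (combine n \<alpha> a b) * cnj (\<psi> (combine n \<alpha> a' b))))\<^sup>2)"
    using split by (intro trace_sq_le_rank_mul_purity[OF finite_sub_bits, where u = u and w = w]) simp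
  moreover have "(\<Sum>b\<in>?B. \<Sum>a\<in>?A. (cmod (\<psi> (combine n \<alpha> a b)))\<^sup>2) = 1"
    using assms sum_sub_bits_combine[of "\<lambda>x. (cmod (\<psi> x))\<^sup>2"] unfolding is_pure_state_def by simp
  ultimately show ?thesis
    by (simp add: purity_eq_sum_norm_sq reduced_state_def)
qed

lemma conc_ent_le_cp_rank:
  assumes "is_pure_state n \<psi>"
  shows "conc_ent n \<psi> \<le> 1 - 1 / real (cp_rank n \<psi>)"
proof -
  let ?R = "real (cp_rank n \<psi>)"
  have "1 \<le> ?R * purity n \<alpha> \<psi>" for \<alpha>
    using one_le_cp_rank_mul_purity[OF assms] .
  moreover from this[of "{}"] have "?R > 0"
    by (cases "?R = 0") auto
  ultimately have purity: "1 / ?R \<le> purity n \<alpha> \<psi>" for \<alpha>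
    by (simp add: field_simps)
  have "2 ^ n / ?R = (\<Sum>\<alpha>\<in>Pow {0..<n}. 1 / ?R)"
    by (simp add: card_Pow)
  also have "\<dots> \<le> (\<Sum>\<alpha>\<in>Pow {0..<n}. purity n \<alpha> \<psi>)"
    using purity by (rule sum_mono)
  finally show ?thesis
    unfolding conc_ent_def by (simp add: field_simps)
qed

lemma sum_binomial_real: "(\<Sum>k=0..n. real (n choose k)) = 2 ^ n"
  using choose_row_sum[of n] by (simp add: atLeast0AtMost flip: of_nat_sum)

lemma b_R_le: "b_R R n \<le> 1 - 1 / real R"
proof -
  have "2 ^ n / real R = (\<Sum>k=0..n. real (n choose k) * (1 / real R))"
    by (simp add: sum_binomial_real flip: sum_divide_distrib)
  also have "\<dots> \<le> (\<Sum>k=0..n. real (n choose k) * max (1 / real R) ((1/2) ^ min k (n - k)))"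
    by (intro sum_mono mult_left_mono) auto
  finally show ?thesis
    unfolding b_R_def by (simp add: field_simps)
qed

lemma b_R_ge: "1 - 1 / real R - 2 * (3/4) ^ n \<le> b_R R n"
proof -
  have "max (1 / real R) ((1/2) ^ min k (n - k)) \<le> 1 / real R + (1/2) ^ k + (1/2) ^ (n - k)" for k
    by (cases "k \<le> n - k") (auto simp: min_def)
  then have "real (n choose k) * max (1 / real R) ((1/2) ^ min k (n - k))
      \<le> real (n choose k) * (1 / real R + (1/2) ^ k + (1/2) ^ (n - k))" for k
    by (intro mult_left_mono) auto
  then have "(\<Sum>k=0..n. real (n choose k) * max (1 / real R) ((1/2) ^ min k (n - k)))
      \<le> (\<Sum>k=0..n. real (n choose k) * (1 / real R) + real (n choose k) * (1/2) ^ k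
                  + real (n choose k) * (1/2) ^ (n - k))"
    by (intro sum_mono) (simp add: algebra_simps)
  also have "\<dots> = 2 ^ n / real R + (3/2) ^ n + (3/2) ^ n"
    using binomial_ring[of "1/2 :: real" 1 n, folded atLeast0AtMost]
      binomial_ring[of "1 :: real" "1/2" n, folded atLeast0AtMost]
    by (simp add: sum.distrib sum_binomial_real flip: sum_divide_distrib)
  finally have "(1 / 2 ^ n) * (\<Sum>k=0..n. real (n choose k) * max (1 / real R) ((1/2) ^ min k (n - k)))
      \<le> (1 / 2 ^ n) * (2 ^ n / real R + 2 * (3/2) ^ n)"
    by (intro mult_left_mono) auto
  also have "\<dots> = 1 / real R + 2 * (3/4) ^ n"
    by (simp add: field_simps power_divide flip: power_mult_distrib)
  finally show ?thesis
    unfolding b_R_def by simp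
qed

lemma b_R_tendsto: "(\<lambda>n. b_R R n) \<longlonglongrightarrow> 1 - 1 / real R"
proof (rule tendsto_sandwich[OF _ _ _ tendsto_const])
  show "\<forall>\<^sub>F n in sequentially. 1 - 1 / real R - 2 * (3/4) ^ n \<le> b_R R n"
    by (intro always_eventually allI b_R_ge)
  show "\<forall>\<^sub>F n in sequentially. b_R R n \<le> 1 - 1 / real R"
    by (intro always_eventually allI b_R_le)
  show "(\<lambda>n. 1 - 1 / real R - 2 * (3/4 :: real) ^ n) \<longlonglongrightarrow> 1 - 1 / real R"
    using tendsto_diff[OF tendsto_const tendsto_mult_right_zero[OF LIMSEQ_power_zero[of "3/4 :: real"]]]
    by simp
qed

theorem corollary2:
  fixes R :: nat
  assumes "R > 0"
  shows "((\<lambda>n. b_R R n) \<longlonglongrightarrow> (real R - 1) / real R) \<and>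
         limsup (\<lambda>n. SUP \<psi>\<in>{\<psi>. is_pure_state n \<psi> \<and> cp_rank n \<psi> = R}. ereal (conc_ent n \<psi>))
           \<le> ereal ((real R - 1) / real R)"
proof -
  have frac_eq: "(real R - 1) / real R = 1 - 1 / real R"
    using assms by (simp add: diff_divide_distrib)
  have "(SUP \<psi>\<in>{\<psi>. is_pure_state n \<psi> \<and> cp_rank n \<psi> = R}. ereal (conc_ent n \<psi>))
      \<le> ereal (1 - 1 / real R)" for n
    using conc_ent_le_cp_rank by (intro SUP_least) auto
  then have "limsup (\<lambda>n. SUP \<psi>\<in>{\<psi>. is_pure_state n \<psi> \<and> cp_rank n \<psi> = R}. ereal (conc_ent n \<psi>))
      \<le> ereal (1 - 1 / real R)"
    by (intro Limsup_bounded always_eventually allI)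
  then show ?thesis
    unfolding frac_eq using b_R_tendsto by blast
qed

end
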